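(* Let $p\ge2$, $n\ge1$, $\epsilon\in[0,1-1/p]$, $m\in\{j/p^n:0\le j\le p^n\}$, and let $\Phi:[0,1]\to\mathbb{R}$ be convex. Then there exists a monotone Boolean function $f:(\mathbb{Z}/p\mathbb{Z})^n\to\{0,1\}$ with $\mathbb{E} f=m$ such that $\mathbb{E}\Phi(T_\epsilon f)\ge\mathbb{E}\Phi(T_\epsilon g)$ for every Boolean function $g:(\mathbb{Z}/p\mathbb{Z})^n\to\{0,1\}$ with $\mathbb{E} g=m$.
   Context: $(\mathbb{Z}/p\mathbb{Z})^n$, with $\mathbb{Z}/p\mathbb{Z}=\{0,1,\dots,p-1\}$, carries the uniform measure. The noise operator is $T_\epsilon f(x)=\mathbb{E} f(x+Z)$, where $Z$ has independent coordinates, each equal to $0$ with probability $1-\epsilon$ and to each nonzero element with probability $\epsilon/(p-1)$. A function $f$ is monotone if $f(x)\le f(y)$ whenever $x_i\le y_i$ for all $i$, where $\{0,1,\dots,p-1\}$ is ordered as integers. *)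

theory Defs
  imports "HOL-Analysis.Analysis"
begin

text \<open>The cube (Z/pZ)^n: functions x on {0..<n} with values in {0..<p},
  extensional (undefined outside {0..<n}).\<close>
definition cube :: "nat \<Rightarrow> nat \<Rightarrow> (nat \<Rightarrow> nat) set" where
  "cube p n = PiE {0..<n} (\<lambda>_. {0..<p})"

definition addp :: "nat \<Rightarrow> nat \<Rightarrow> (nat \<Rightarrow> nat) \<Rightarrow> (nat \<Rightarrow> nat) \<Rightarrow> (nat \<Rightarrow> nat)" where
  "addp p n x z = restrict (\<lambda>i. (x i + z i) mod p) {0..<n}"

definition expect :: "nat \<Rightarrow> nat \<Rightarrow> ((nat \<Rightarrow> nat) \<Rightarrow> real) \<Rightarrow> real" where
  "expect p n f = (\<Sum>x\<in>cube p n. f x) / real (card (cube p n))"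

definition noise_wt :: "nat \<Rightarrow> real \<Rightarrow> nat \<Rightarrow> real" where
  "noise_wt p eps a = (if a = 0 then 1 - eps else eps / real (p - 1))"

definition noise_op :: "nat \<Rightarrow> nat \<Rightarrow> real \<Rightarrow> ((nat \<Rightarrow> nat) \<Rightarrow> real) \<Rightarrow> (nat \<Rightarrow> nat) \<Rightarrow> real" where
  "noise_op p n eps f x = (\<Sum>z\<in>cube p n. (\<Prod>i<n. noise_wt p eps (z i)) * f (addp p n x z))"

definition boolean_fun :: "nat \<Rightarrow> nat \<Rightarrow> ((nat \<Rightarrow> nat) \<Rightarrow> real) \<Rightarrow> bool" where
  "boolean_fun p n f \<longleftrightarrow> (\<forall>x\<in>cube p n. f x \<in> {0, 1})"

definition monotone_fun :: "nat \<Rightarrow> nat \<Rightarrow> ((nat \<Rightarrow> nat) \<Rightarrow> real) \<Rightarrow> bool" where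
  "monotone_fun p n f \<longleftrightarrow>
     (\<forall>x\<in>cube p n. \<forall>y\<in>cube p n. (\<forall>i<n. x i \<le> y i) \<longrightarrow> f x \<le> f y)"

end

theory Submission
  imports Defs
begin

text \<open>Among all sets \<open>A\<close> of \<open>p^n m\<close> points, take one maximising \<open>E \<Phi>(T\<^sub>\<epsilon> 1\<^sub>A)\<close> and,
  among those, maximising the total coordinate sum of its points. If \<open>1\<^sub>A\<close> were not monotone,
  some \<open>u \<in> A\<close> has \<open>u(i := t) \<notin> A\<close> with \<open>u\<^sub>i < t\<close>. Compressing in direction \<open>i\<close> between the
  values \<open>s = u\<^sub>i\<close> and \<open>t\<close> (on every pair \<open>{y, y(i := t)}\<close> with \<open>y\<^sub>i = s\<close>, move the mass
  to the upper point) keeps \<open>|A|\<close> and strictly raises the coordinate sum. It keeps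
  \<open>T f(x) + T f(x(i := t))\<close> fixed while pushing the smaller of the two values further down,
  because the noise keeps a coordinate at least as often as it moves it to any given other
  value; by convexity of \<open>\<Phi>\<close> this does not decrease \<open>E \<Phi>(T f)\<close>, a contradiction.\<close>

lemma mem_cube_iff:
  "x \<in> cube p n \<longleftrightarrow> (\<forall>k<n. x k < p) \<and> (\<forall>k. n \<le> k \<longrightarrow> x k = undefined)"
  unfolding cube_def PiE_def extensional_def by auto

lemma finite_cube: "finite (cube p n)"
  unfolding cube_def by (intro finite_PiE) auto

lemma card_cube: "card (cube p n) = p ^ n"
  unfolding cube_def by (simp add: card_PiE)

lemma fun_upd_in_cube: "x \<in> cube p n \<Longrightarrow> i < n \<Longrightarrow> t < p \<Longrightarrow> x(i := t) \<in> cube p n"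
  unfolding mem_cube_iff by auto

lemma add_mod_left_cancel_less:
  fixes a z z' p :: nat
  assumes "(a + z) mod p = (a + z') mod p" and "z < p" and "z' < p"
  shows "z = z'"
proof -
  have "z mod p = z' mod p"
    using assms(1) by (simp add: nat_mod_eq_iff)
  then show ?thesis
    using assms(2,3) by simp
qed

lemma bij_betw_addp:
  assumes "0 < p"
  shows "bij_betw (addp p n x) (cube p n) (cube p n)"
proof -
  have into: "addp p n x ` cube p n \<subseteq> cube p n"
    using assms by (auto simp: mem_cube_iff addp_def)
  have "inj_on (addp p n x) (cube p n)"
  proof (rule inj_onI, rule ext)
    fix z z' k
    assume z: "z \<in> cube p n" and z': "z' \<in> cube p n" and eq: "addp p n x z = addp p n x z'"
    show "z k = z' k"
    proof (cases "k < n")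
      case True
      then have "(x k + z k) mod p = (x k + z' k) mod p"
        using fun_cong[OF eq, of k] by (simp add: addp_def)
      then show ?thesis
        using True z z' by (auto simp: mem_cube_iff intro: add_mod_left_cancel_less)
    qed (use z z' in \<open>auto simp: mem_cube_iff\<close>)
  qed
  then show ?thesis
    using endo_inj_surj[OF finite_cube into] by (simp add: bij_betw_def)
qed

lemma expect_cong:
  "(\<And>x. x \<in> cube p n \<Longrightarrow> f x = g x) \<Longrightarrow> expect p n f = expect p n g"
  unfolding expect_def by simp

lemma expect_indicator:
  assumes "A \<subseteq> cube p n"
  shows "expect p n (indicator A) = real (card A) / real (p ^ n)"
proof -
  have "(\<Sum>x\<in>cube p n. indicator A x :: real) = real (card A)"
    using assms finite_cube by (simp add: indicator_def sum.If_cases Int_absorb1 Int_absorb2)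
  then show ?thesis
    by (simp add: expect_def card_cube)
qed

lemma boolean_fun_indicator_on_cube:
  assumes "boolean_fun p n g"
  obtains B where "B \<subseteq> cube p n" and "\<And>x. x \<in> cube p n \<Longrightarrow> g x = indicator B x"
proof
  show "{y \<in> cube p n. g y = 1} \<subseteq> cube p n" by auto
  show "g x = indicator {y \<in> cube p n. g y = 1} x" if "x \<in> cube p n" for x
    using assms that by (auto simp: boolean_fun_def indicator_def)
qed

lemma noise_op_cong:
  assumes "0 < p" and "\<And>y. y \<in> cube p n \<Longrightarrow> f y = g y"
  shows "noise_op p n eps f x = noise_op p n eps g x"
  using assms bij_betw_apply[OF bij_betw_addp[OF assms(1)]]
  unfolding noise_op_def by (intro sum.cong) auto

definition noise_kernel1 :: "nat \<Rightarrow> real \<Rightarrow> nat \<Rightarrow> nat \<Rightarrow> real" where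
  "noise_kernel1 p eps a b = (if a = b then 1 - eps else eps / real (p - 1))"

definition noise_kernel :: "nat \<Rightarrow> nat \<Rightarrow> real \<Rightarrow> (nat \<Rightarrow> nat) \<Rightarrow> (nat \<Rightarrow> nat) \<Rightarrow> real" where
  "noise_kernel p n eps x y = (\<Prod>k<n. noise_kernel1 p eps (x k) (y k))"

lemma noise_op_kernel:
  assumes "0 < p" and x: "x \<in> cube p n"
  shows "noise_op p n eps f x = (\<Sum>y\<in>cube p n. noise_kernel p n eps x y * f y)"
proof -
  have "noise_op p n eps f x
      = (\<Sum>z\<in>cube p n. noise_kernel p n eps x (addp p n x z) * f (addp p n x z))"
    unfolding noise_op_def
  proof (intro sum.cong refl arg_cong2[where f = "(*)"])
    fix z assume z: "z \<in> cube p n"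
    show "(\<Prod>k<n. noise_wt p eps (z k)) = noise_kernel p n eps x (addp p n x z)"
      unfolding noise_kernel_def
    proof (intro prod.cong refl)
      fix k assume "k \<in> {..<n}"
      then have "k < n" "z k < p" "x k < p"
        using x z by (auto simp: mem_cube_iff)
      then show "noise_wt p eps (z k) = noise_kernel1 p eps (x k) (addp p n x z k)"
        using add_mod_left_cancel_less[of "x k" "z k" p 0]
        by (auto simp: noise_wt_def noise_kernel1_def addp_def)
    qed
  qed
  also have "\<dots> = (\<Sum>y\<in>cube p n. noise_kernel p n eps x y * f y)"
    using sum.reindex_bij_betw[OF bij_betw_addp[OF assms(1)]] .
  finally show ?thesis .
qed

locale noise_setting =
  fixes p n :: nat and eps :: real
  assumes two_le_p: "2 \<le> p" and eps_nonneg: "0 \<le> eps" and eps_le: "eps \<le> 1 - 1 / real p"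
begin

lemma p_pos: "0 < p"
  using two_le_p by simp

lemma off_diagonal_le_diagonal: "eps / real (p - 1) \<le> 1 - eps"
proof -
  have "eps * real p \<le> real p - 1"
    using eps_le two_le_p by (simp add: field_simps)
  then have "eps \<le> (1 - eps) * real (p - 1)"
    using two_le_p by (simp add: of_nat_diff algebra_simps)
  then show ?thesis
    using two_le_p by (simp add: divide_le_eq)
qed

lemma noise_kernel1_nonneg: "0 \<le> noise_kernel1 p eps a b"
proof -
  have "0 \<le> eps / real (p - 1)"
    using eps_nonneg by simp
  then show ?thesis
    using off_diagonal_le_diagonal unfolding noise_kernel1_def by auto
qed

lemma noise_kernel_nonneg: "0 \<le> noise_kernel p n eps x y"
  unfolding noise_kernel_def by (intro prod_nonneg) (auto intro: noise_kernel1_nonneg)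

lemma sum_noise_kernel1:
  assumes "a < p"
  shows "(\<Sum>b\<in>{0..<p}. noise_kernel1 p eps a b) = 1"
proof -
  have "(\<Sum>b\<in>{0..<p}. noise_kernel1 p eps a b)
      = noise_kernel1 p eps a a + (\<Sum>b\<in>{0..<p} - {a}. eps / real (p - 1))"
    using assms by (subst sum.remove[of _ a]) (auto simp: noise_kernel1_def)
  also have "\<dots> = 1"
    using assms two_le_p by (simp add: noise_kernel1_def)
  finally show ?thesis .
qed

lemma sum_noise_kernel:
  assumes "x \<in> cube p n"
  shows "(\<Sum>y\<in>cube p n. noise_kernel p n eps x y) = 1"
proof -
  have "(\<Sum>y\<in>cube p n. noise_kernel p n eps x y)
      = (\<Prod>k<n. \<Sum>b\<in>{0..<p}. noise_kernel1 p eps (x k) b)"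
    unfolding noise_kernel_def cube_def atLeast0LessThan by (subst prod_sum_PiE) auto
  also have "\<dots> = 1"
    using assms by (intro prod.neutral) (auto simp: mem_cube_iff sum_noise_kernel1)
  finally show ?thesis .
qed

lemma noise_op_in_unit_interval:
  assumes x: "x \<in> cube p n" and f: "\<And>y. y \<in> cube p n \<Longrightarrow> f y \<in> {0..1}"
  shows "noise_op p n eps f x \<in> {0..1}"
proof -
  have "0 \<le> (\<Sum>y\<in>cube p n. noise_kernel p n eps x y * f y)"
    using f noise_kernel_nonneg by (intro sum_nonneg) auto
  moreover have "(\<Sum>y\<in>cube p n. noise_kernel p n eps x y * f y)
      \<le> (\<Sum>y\<in>cube p n. noise_kernel p n eps x y)"
    using f noise_kernel_nonneg by (intro sum_mono) (simp add: mult_left_le)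
  ultimately show ?thesis
    using sum_noise_kernel[OF x] noise_op_kernel[OF p_pos x] by simp
qed

end

lemma weighted_min_max_le:
  fixes \<alpha> \<beta> a b :: real
  assumes "0 \<le> \<beta>" and "\<beta> \<le> \<alpha>"
  shows "\<alpha> * min a b + \<beta> * max a b \<le> \<alpha> * a + \<beta> * b"
    and "\<alpha> * min a b + \<beta> * max a b \<le> \<beta> * a + \<alpha> * b"
proof -
  have "(\<alpha> - \<beta>) * c \<le> 0" if "c \<le> 0" for c
    using assms that by (intro mult_nonneg_nonpos) auto
  from this[of "b - a"] this[of "a - b"]
  show "\<alpha> * min a b + \<beta> * max a b \<le> \<alpha> * a + \<beta> * b"
    and "\<alpha> * min a b + \<beta> * max a b \<le> \<beta> * a + \<alpha> * b"
    by (cases "a \<le> b"; simp add: algebra_simps)+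
qed

lemma convex_on_spread_pair_le:
  fixes \<Phi> :: "real \<Rightarrow> real"
  assumes cv: "convex_on I \<Phi>" and I: "a' \<in> I" "b' \<in> I"
    and le: "a' \<le> a" "a' \<le> b" and sum: "a' + b' = a + b"
  shows "\<Phi> a + \<Phi> b \<le> \<Phi> a' + \<Phi> b'"
proof (cases "a' = b'")
  case True
  then have "a = a'" and "b = a'"
    using le sum by auto
  then show ?thesis
    using True by simp
next
  case False
  then have "a' < b'"
    using le sum by auto
  define l where "l = (a - a') / (b' - a')"
  have l: "0 \<le> l" "l \<le> 1"
    using \<open>a' < b'\<close> le sum unfolding l_def by (auto simp: divide_simps)
  have "l * (b' - a') = a - a'"
    using \<open>a' < b'\<close> unfolding l_def by simp
  then have a: "a = (1 - l) *\<^sub>R a' + l *\<^sub>R b'" and b: "b = l *\<^sub>R a' + (1 - l) *\<^sub>R b'"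
    using sum by (simp_all add: algebra_simps)
  have "\<Phi> a \<le> (1 - l) * \<Phi> a' + l * \<Phi> b'"
    unfolding a using convex_onD[OF cv, of l a' b'] l I by simp
  moreover have "\<Phi> b \<le> l * \<Phi> a' + (1 - l) * \<Phi> b'"
    unfolding b using convex_onD[OF cv, of "1 - l" a' b'] l I by simp
  ultimately show ?thesis
    by (simp add: algebra_simps)
qed

lemma sum_cube_split_pairs:
  assumes i: "i < n" and s: "s < p" and t: "t < p" and "s \<noteq> t"
  shows "(\<Sum>y\<in>cube p n. h y)
    = (\<Sum>y\<in>{y\<in>cube p n. y i = s}. h y + h (y(i := t)))
      + (\<Sum>y\<in>{y\<in>cube p n. y i \<noteq> s \<and> y i \<noteq> t}. h y)"
proof -
  let ?S = "{y\<in>cube p n. y i = s}" and ?T = "{y\<in>cube p n. y i = t}"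
    and ?R = "{y\<in>cube p n. y i \<noteq> s \<and> y i \<noteq> t}"
  have fin: "finite ?S" "finite ?T" "finite ?R"
    using finite_cube by auto
  have "bij_betw (\<lambda>y. y(i := t)) ?S ?T"
    by (rule bij_betw_byWitness[where f' = "\<lambda>y. y(i := s)"])
      (auto intro!: fun_upd_in_cube simp: i s t)
  then have "(\<Sum>y\<in>?T. h y) = (\<Sum>y\<in>?S. h (y(i := t)))"
    using sum.reindex_bij_betw[of _ ?S ?T h] by simp
  moreover have "(\<Sum>y\<in>cube p n. h y) = (\<Sum>y\<in>?S \<union> ?T. h y) + (\<Sum>y\<in>?R. h y)"
    using fin by (subst sum.union_disjoint[symmetric]) (auto intro: sum.cong)
  moreover have "(\<Sum>y\<in>?S \<union> ?T. h y) = (\<Sum>y\<in>?S. h y) + (\<Sum>y\<in>?T. h y)"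
    using fin \<open>s \<noteq> t\<close> by (intro sum.union_disjoint) auto
  ultimately have "(\<Sum>y\<in>cube p n. h y)
      = ((\<Sum>y\<in>?S. h y) + (\<Sum>y\<in>?S. h (y(i := t)))) + (\<Sum>y\<in>?R. h y)"
    by simp
  then show ?thesis
    by (simp add: sum.distrib)
qed

definition coord_sum :: "nat \<Rightarrow> (nat \<Rightarrow> nat) \<Rightarrow> real" where
  "coord_sum n y = (\<Sum>k<n. real (y k))"

definition coord_moment :: "nat \<Rightarrow> nat \<Rightarrow> ((nat \<Rightarrow> nat) \<Rightarrow> real) \<Rightarrow> real" where
  "coord_moment p n f = (\<Sum>y\<in>cube p n. f y * coord_sum n y)"

lemma coord_sum_upd:
  assumes "i < n"
  shows "coord_sum n (y(i := t)) = coord_sum n y - real (y i) + real t"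
proof -
  have "coord_sum n (y(i := t)) = real t + (\<Sum>k\<in>{..<n} - {i}. real (y k))"
    unfolding coord_sum_def using assms by (subst sum.remove[of _ i]) (auto intro: sum.cong)
  moreover have "coord_sum n y = real (y i) + (\<Sum>k\<in>{..<n} - {i}. real (y k))"
    unfolding coord_sum_def using assms by (subst sum.remove[of _ i]) auto
  ultimately show ?thesis
    by simp
qed

definition compress :: "nat \<Rightarrow> nat \<Rightarrow> nat \<Rightarrow> ((nat \<Rightarrow> nat) \<Rightarrow> real) \<Rightarrow> (nat \<Rightarrow> nat) \<Rightarrow> real" where
  "compress i s t f y =
     (if y i = s then min (f y) (f (y(i := t)))
      else if y i = t then max (f y) (f (y(i := s)))
      else f y)"

lemma compress_lower: "y i = s \<Longrightarrow> compress i s t f y = min (f y) (f (y(i := t)))"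
  by (simp add: compress_def)

lemma compress_upper:
  "y i = s \<Longrightarrow> s \<noteq> t \<Longrightarrow> compress i s t f (y(i := t)) = max (f (y(i := t))) (f y)"
  by (simp add: compress_def fun_upd_idem)

lemma compress_other: "y i \<noteq> s \<Longrightarrow> y i \<noteq> t \<Longrightarrow> compress i s t f y = f y"
  by (simp add: compress_def)

lemma compress_pair_sum:
  "y i = s \<Longrightarrow> s \<noteq> t \<Longrightarrow> compress i s t f y + compress i s t f (y(i := t)) = f y + f (y(i := t))"
  by (simp add: compress_lower compress_upper min_def max_def)

lemma compress_preserves:
  assumes "\<And>y. y \<in> cube p n \<Longrightarrow> P (f y)" and "y \<in> cube p n" and "i < n" and "s < p" and "t < p"
  shows "P (compress i s t f y)"
  using assms fun_upd_in_cube[OF assms(2,3)] unfolding compress_def min_def max_def by auto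

locale compression = noise_setting +
  fixes i s t :: nat
  assumes i_less: "i < n" and s_less_t: "s < t" and t_less: "t < p"
begin

lemma s_less: "s < p"
  using s_less_t t_less by simp

lemma s_neq_t: "s \<noteq> t"
  using s_less_t by simp

lemmas sum_cube_split = sum_cube_split_pairs[OF i_less s_less t_less s_neq_t]

definition kernel_off :: "(nat \<Rightarrow> nat) \<Rightarrow> (nat \<Rightarrow> nat) \<Rightarrow> real" where
  "kernel_off x y = (\<Prod>k\<in>{..<n} - {i}. noise_kernel1 p eps (x k) (y k))"

lemma noise_kernel_split:
  "noise_kernel p n eps x y = noise_kernel1 p eps (x i) (y i) * kernel_off x y"
  unfolding noise_kernel_def kernel_off_def using i_less by (subst prod.remove[of _ i]) auto

lemma kernel_off_upd [simp]: "kernel_off (x(i := a)) y = kernel_off x y" "kernel_off x (y(i := a)) = kernel_off x y"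
  unfolding kernel_off_def by (auto intro: prod.cong)

lemma kernel_off_nonneg: "0 \<le> kernel_off x y"
  unfolding kernel_off_def by (intro prod_nonneg) (auto intro: noise_kernel1_nonneg)

lemma noise_kernel_shift_both:
  "x i = s \<Longrightarrow> y i = s \<Longrightarrow> noise_kernel p n eps (x(i := t)) (y(i := t)) = noise_kernel p n eps x y"
  by (simp add: noise_kernel_split noise_kernel1_def)

lemma noise_kernel_shift_swap:
  "x i = s \<Longrightarrow> y i = s \<Longrightarrow> noise_kernel p n eps (x(i := t)) y = noise_kernel p n eps x (y(i := t))"
  using s_neq_t by (simp add: noise_kernel_split noise_kernel1_def)

lemma noise_kernel_shift_le:
  assumes "x i = s" and "y i = s"
  shows "noise_kernel p n eps x (y(i := t)) \<le> noise_kernel p n eps x y"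
  using assms s_neq_t mult_right_mono[OF off_diagonal_le_diagonal kernel_off_nonneg]
  by (simp add: noise_kernel_split noise_kernel1_def)

lemma noise_kernel_shift_left_other:
  "x i = s \<Longrightarrow> y i \<noteq> s \<Longrightarrow> y i \<noteq> t \<Longrightarrow> noise_kernel p n eps (x(i := t)) y = noise_kernel p n eps x y"
  by (simp add: noise_kernel_split noise_kernel1_def)

lemma noise_kernel_shift_right_other:
  "x i \<noteq> s \<Longrightarrow> x i \<noteq> t \<Longrightarrow> y i = s \<Longrightarrow> noise_kernel p n eps x (y(i := t)) = noise_kernel p n eps x y"
  by (simp add: noise_kernel_split noise_kernel1_def)

abbreviation lower :: "(nat \<Rightarrow> nat) set" where
  "lower \<equiv> {y \<in> cube p n. y i = s}"

abbreviation untouched :: "(nat \<Rightarrow> nat) set" where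
  "untouched \<equiv> {y \<in> cube p n. y i \<noteq> s \<and> y i \<noteq> t}"

abbreviation K :: "(nat \<Rightarrow> nat) \<Rightarrow> (nat \<Rightarrow> nat) \<Rightarrow> real" where
  "K \<equiv> noise_kernel p n eps"

lemma noise_op_split:
  assumes "x \<in> cube p n"
  shows "noise_op p n eps f x
    = (\<Sum>y\<in>lower. K x y * f y + K x (y(i := t)) * f (y(i := t))) + (\<Sum>y\<in>untouched. K x y * f y)"
  using noise_op_kernel[OF p_pos assms] sum_cube_split by simp

lemma sum_compress: "(\<Sum>y\<in>cube p n. compress i s t f y) = (\<Sum>y\<in>cube p n. f y)"
  unfolding sum_cube_split[of "compress i s t f"] sum_cube_split[of f]
  using s_neq_t by (simp add: compress_pair_sum compress_other)

lemma noise_op_compress_untouched: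
  assumes "x \<in> untouched"
  shows "noise_op p n eps (compress i s t f) x = noise_op p n eps f x"
proof -
  have "K x y * compress i s t f y + K x (y(i := t)) * compress i s t f (y(i := t))
      = K x y * f y + K x (y(i := t)) * f (y(i := t))" if "y \<in> lower" for y
  proof -
    have "K x (y(i := t)) = K x y"
      using that assms by (simp add: noise_kernel_shift_right_other)
    moreover have "compress i s t f y + compress i s t f (y(i := t)) = f y + f (y(i := t))"
      using that s_neq_t by (simp add: compress_pair_sum)
    ultimately show ?thesis
      by (metis distrib_left)
  qed
  then show ?thesis
    using assms by (simp add: noise_op_split compress_other)
qed

text \<open>Summing over the pairs \<open>{y, y(i := t)}\<close>, the inequalities are instances of
  \<open>weighted_min_max_le\<close> with weights \<open>K x y \<ge> K x (y(i := t))\<close>: from \<open>x\<close>, keeping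
  coordinate \<open>i\<close> is at least as likely as switching it, since \<open>eps \<le> 1 - 1/p\<close>.\<close>

lemma noise_op_compress_pair:
  fixes f :: "(nat \<Rightarrow> nat) \<Rightarrow> real"
  assumes x: "x \<in> cube p n" "x i = s"
  defines "g \<equiv> compress i s t f"
  shows "noise_op p n eps g x + noise_op p n eps g (x(i := t))
      = noise_op p n eps f x + noise_op p n eps f (x(i := t))"
    and "noise_op p n eps g x \<le> noise_op p n eps f x"
    and "noise_op p n eps g x \<le> noise_op p n eps f (x(i := t))"
proof -
  have xt: "x(i := t) \<in> cube p n"
    using fun_upd_in_cube[OF x(1) i_less t_less] .
  let ?a = "\<lambda>y. K x y" and ?b = "\<lambda>y. K x (y(i := t))"
  let ?m = "\<lambda>y. min (f y) (f (y(i := t)))" and ?M = "\<lambda>y. max (f y) (f (y(i := t)))"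
  let ?r = "\<Sum>y\<in>untouched. K x y * f y"
  have untouched_g: "(\<Sum>y\<in>untouched. K z y * g y) = (\<Sum>y\<in>untouched. K z y * f y)" for z
    by (intro sum.cong) (auto simp: g_def compress_other)
  have untouched_t: "(\<Sum>y\<in>untouched. K (x(i := t)) y * f y) = ?r"
    by (intro sum.cong) (auto simp: noise_kernel_shift_left_other x)
  have gx: "noise_op p n eps g x = (\<Sum>y\<in>lower. ?a y * ?m y + ?b y * ?M y) + ?r"
    unfolding noise_op_split[OF x(1)] untouched_g using s_neq_t
    by (intro arg_cong2[where f = "(+)"] sum.cong refl)
      (auto simp: g_def compress_lower compress_upper max.commute)
  have gxt: "noise_op p n eps g (x(i := t)) = (\<Sum>y\<in>lower. ?b y * ?m y + ?a y * ?M y) + ?r"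
    unfolding noise_op_split[OF xt] untouched_g untouched_t using s_neq_t
    by (intro arg_cong2[where f = "(+)"] sum.cong refl)
      (auto simp: g_def compress_lower compress_upper max.commute
        noise_kernel_shift_both noise_kernel_shift_swap x)
  have fx: "noise_op p n eps f x = (\<Sum>y\<in>lower. ?a y * f y + ?b y * f (y(i := t))) + ?r"
    by (simp add: noise_op_split[OF x(1)])
  have fxt: "noise_op p n eps f (x(i := t)) = (\<Sum>y\<in>lower. ?b y * f y + ?a y * f (y(i := t))) + ?r"
    unfolding noise_op_split[OF xt] untouched_t
    by (intro arg_cong2[where f = "(+)"] sum.cong refl)
      (auto simp: noise_kernel_shift_both noise_kernel_shift_swap x)
  have ab: "0 \<le> ?b y" "?b y \<le> ?a y" if "y \<in> lower" for y
    using that noise_kernel_shift_le[of x y] x noise_kernel_nonneg by auto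
  have "(\<Sum>y\<in>lower. ?a y * ?m y + ?b y * ?M y) + (\<Sum>y\<in>lower. ?b y * ?m y + ?a y * ?M y)
      = (\<Sum>y\<in>lower. ?a y * f y + ?b y * f (y(i := t))) + (\<Sum>y\<in>lower. ?b y * f y + ?a y * f (y(i := t)))"
    unfolding sum.distrib[symmetric]
    by (intro sum.cong refl) (auto simp: min_def max_def algebra_simps)
  then show "noise_op p n eps g x + noise_op p n eps g (x(i := t))
      = noise_op p n eps f x + noise_op p n eps f (x(i := t))"
    unfolding gx gxt fx fxt by simp
  have "(\<Sum>y\<in>lower. ?a y * ?m y + ?b y * ?M y) \<le> (\<Sum>y\<in>lower. ?a y * f y + ?b y * f (y(i := t)))"
    by (intro sum_mono weighted_min_max_le(1) ab)
  then show "noise_op p n eps g x \<le> noise_op p n eps f x"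
    unfolding gx fx by simp
  have "(\<Sum>y\<in>lower. ?a y * ?m y + ?b y * ?M y) \<le> (\<Sum>y\<in>lower. ?b y * f y + ?a y * f (y(i := t)))"
    by (intro sum_mono weighted_min_max_le(2) ab)
  then show "noise_op p n eps g x \<le> noise_op p n eps f (x(i := t))"
    unfolding gx fxt by simp
qed

lemma expect_convex_noise_op_compress:
  fixes \<Phi> :: "real \<Rightarrow> real"
  assumes cv: "convex_on {0..1} \<Phi>" and f: "\<And>y. y \<in> cube p n \<Longrightarrow> f y \<in> {0..1}"
  shows "expect p n (\<lambda>x. \<Phi> (noise_op p n eps f x))
    \<le> expect p n (\<lambda>x. \<Phi> (noise_op p n eps (compress i s t f) x))"
proof -
  let ?g = "compress i s t f"
  have g: "?g y \<in> {0..1}" if "y \<in> cube p n" for y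
    using compress_preserves[where P = "\<lambda>v. v \<in> {0..1}", OF f that i_less s_less t_less] .
  have "(\<Sum>x\<in>cube p n. \<Phi> (noise_op p n eps f x)) \<le> (\<Sum>x\<in>cube p n. \<Phi> (noise_op p n eps ?g x))"
    unfolding sum_cube_split[of "\<lambda>x. \<Phi> (noise_op p n eps f x)"]
      sum_cube_split[of "\<lambda>x. \<Phi> (noise_op p n eps ?g x)"]
  proof (rule add_mono; rule sum_mono)
    fix x assume x: "x \<in> lower"
    then have "x(i := t) \<in> cube p n"
      using fun_upd_in_cube[OF _ i_less t_less] by auto
    with x show "\<Phi> (noise_op p n eps f x) + \<Phi> (noise_op p n eps f (x(i := t)))
        \<le> \<Phi> (noise_op p n eps ?g x) + \<Phi> (noise_op p n eps ?g (x(i := t)))"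
      using noise_op_compress_pair[of x f] noise_op_in_unit_interval[OF _ g]
      by (intro convex_on_spread_pair_le[OF cv]) auto
  next
    fix x assume "x \<in> untouched"
    then show "\<Phi> (noise_op p n eps f x) \<le> \<Phi> (noise_op p n eps ?g x)"
      by (simp add: noise_op_compress_untouched)
  qed
  then show ?thesis
    unfolding expect_def by (simp add: divide_right_mono)
qed

lemma coord_moment_compress_less:
  assumes u: "u \<in> cube p n" "u i = s" "f u = 1" "f (u(i := t)) = 0"
    and f: "\<And>y. y \<in> cube p n \<Longrightarrow> f y \<in> {0, 1}"
  shows "coord_moment p n f < coord_moment p n (compress i s t f)"
proof -
  have shift: "coord_sum n (y(i := t)) = coord_sum n y + (real t - real s)" if "y i = s" for y
    using coord_sum_upd[OF i_less, of y t] that by simp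
  have le: "f y * coord_sum n y + f (y(i := t)) * coord_sum n (y(i := t))
      \<le> compress i s t f y * coord_sum n y + compress i s t f (y(i := t)) * coord_sum n (y(i := t))"
    if y: "y \<in> lower" for y
  proof -
    have "f y \<in> {0, 1}" "f (y(i := t)) \<in> {0, 1}"
      using y f fun_upd_in_cube[OF _ i_less t_less] by auto
    then show ?thesis
      using y shift[of y] s_less_t s_neq_t by (auto simp: compress_lower compress_upper)
  qed
  have "f u * coord_sum n u + f (u(i := t)) * coord_sum n (u(i := t))
      < compress i s t f u * coord_sum n u + compress i s t f (u(i := t)) * coord_sum n (u(i := t))"
    using u shift[of u] s_less_t s_neq_t by (simp add: compress_lower compress_upper)
  then show ?thesis
    unfolding coord_moment_def sum_cube_split[of "\<lambda>y. f y * coord_sum n y"]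
      sum_cube_split[of "\<lambda>y. compress i s t f y * coord_sum n y"]
    using u(1,2) le finite_cube
    by (intro add_less_le_mono sum_strict_mono_ex1 sum_mono) (auto simp: compress_other)
qed

end

lemma monotone_violation_single_coord:
  assumes "x \<in> cube p n" and "y \<in> cube p n" and "\<forall>k<n. x k \<le> y k" and "x \<in> A" and "y \<notin> A"
  obtains u i t where "u \<in> cube p n" "i < n" "u i < t" "t < p" "u \<in> A" "u(i := t) \<notin> A"
  using assms
proof (induction "card {k\<in>{..<n}. x k \<noteq> y k}" arbitrary: x rule: less_induct)
  case less
  have "\<exists>i<n. x i \<noteq> y i"
  proof (rule ccontr)
    assume "\<not> (\<exists>i<n. x i \<noteq> y i)"
    then have "x = y"
      using less.prems(2,3) by (intro ext) (metis mem_cube_iff not_le)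
    then show False
      using less.prems(5,6) by simp
  qed
  then obtain i where i: "i < n" "x i \<noteq> y i"
    by blast
  then have "x i < y i" and "y i < p"
    using less.prems by (auto simp: mem_cube_iff le_neq_implies_less)
  define z where "z = x(i := y i)"
  have z: "z \<in> cube p n"
    unfolding z_def using fun_upd_in_cube[OF less.prems(2) i(1) \<open>y i < p\<close>] .
  show ?case
  proof (cases "z \<in> A")
    case False
    then show ?thesis
      using less.prems(1)[of x i "y i"] less.prems(2,5) i \<open>x i < y i\<close> \<open>y i < p\<close>
      unfolding z_def by blast
  next
    case True
    have "{k\<in>{..<n}. z k \<noteq> y k} = {k\<in>{..<n}. x k \<noteq> y k} - {i}"
      unfolding z_def by auto
    then have "card {k\<in>{..<n}. z k \<noteq> y k} < card {k\<in>{..<n}. x k \<noteq> y k}"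
      using i by (simp only:) (rule card_Diff1_less; simp)
    moreover have "\<forall>k<n. z k \<le> y k"
      using less.prems(4) unfolding z_def by auto
    ultimately show ?thesis
      using less.hyps[of z] less.prems(1,3,6) True z by blast
  qed
qed

lemma not_monotone_indicator_single_coord:
  assumes "\<not> monotone_fun p n (indicator A)"
  obtains u i t where "u \<in> cube p n" "i < n" "u i < t" "t < p" "u \<in> A" "u(i := t) \<notin> A"
proof -
  obtain x y where x: "x \<in> cube p n" and y: "y \<in> cube p n" and le: "\<forall>k<n. x k \<le> y k"
    and not_le: "\<not> (indicator A x :: real) \<le> indicator A y"
    using assms unfolding monotone_fun_def by blast
  from not_le have "x \<in> A" and "y \<notin> A"
    by (auto simp: indicator_def split: if_splits)
  with x y le show thesis
    using that by (rule monotone_violation_single_coord)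
qed

lemma finite_lex_maximum:
  fixes f g :: "'a \<Rightarrow> 'b :: linorder"
  assumes "finite S" and "S \<noteq> {}"
  shows "\<exists>x\<in>S. (\<forall>y\<in>S. f y \<le> f x) \<and> (\<forall>y\<in>S. f y = f x \<longrightarrow> g y \<le> g x)"
proof -
  define S' where "S' = {y \<in> S. f y = Max (f ` S)}"
  have "Max (f ` S) \<in> f ` S"
    using assms by simp
  then have "finite S'" "S' \<noteq> {}"
    using assms(1) unfolding S'_def by auto
  then have "Max (g ` S') \<in> g ` S'"
    by simp
  then obtain x where "x \<in> S'" "g x = Max (g ` S')"
    by auto
  then show ?thesis
    using assms(1) \<open>finite S'\<close> by (intro bexI[of _ x]) (auto simp: S'_def)
qed

context noise_setting
begin

lemma compress_non_monotone_indicator: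
  fixes \<Phi> :: "real \<Rightarrow> real"
  assumes cv: "convex_on {0..1} \<Phi>" and A: "A \<subseteq> cube p n"
    and "\<not> monotone_fun p n (indicator A)"
  obtains B where "B \<subseteq> cube p n" and "card B = card A"
    and "expect p n (\<lambda>x. \<Phi> (noise_op p n eps (indicator A) x))
      \<le> expect p n (\<lambda>x. \<Phi> (noise_op p n eps (indicator B) x))"
    and "coord_moment p n (indicator A) < coord_moment p n (indicator B)"
proof -
  obtain u i t where u: "u \<in> cube p n" "i < n" "u i < t" "t < p" "u \<in> A" "u(i := t) \<notin> A"
    using not_monotone_indicator_single_coord[OF assms(3)] .
  interpret compression p n eps i "u i" t
    using u by unfold_locales auto
  let ?g = "compress i (u i) t (indicator A)"
  have "?g y \<in> {0, 1}" if "y \<in> cube p n" for y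
    using compress_preserves[where P = "\<lambda>v. v \<in> {0, 1}" and f = "indicator A",
        OF _ that i_less s_less t_less]
    by (simp add: indicator_def)
  then obtain B where B: "B \<subseteq> cube p n" and g: "\<And>x. x \<in> cube p n \<Longrightarrow> ?g x = indicator B x"
    using boolean_fun_indicator_on_cube[of p n ?g] unfolding boolean_fun_def by blast
  have "expect p n (indicator B) = expect p n ?g"
    using g by (intro expect_cong) simp
  also have "\<dots> = expect p n (indicator A)"
    unfolding expect_def sum_compress ..
  finally have "card B = card A"
    using B A p_pos by (simp add: expect_indicator)
  moreover have "noise_op p n eps ?g x = noise_op p n eps (indicator B) x" for x
    using g by (intro noise_op_cong[OF p_pos]) simp
  then have "expect p n (\<lambda>x. \<Phi> (noise_op p n eps (indicator A) x))
      \<le> expect p n (\<lambda>x. \<Phi> (noise_op p n eps (indicator B) x))"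
    using expect_convex_noise_op_compress[OF cv, of "indicator A"] by simp
  moreover have "coord_moment p n ?g = coord_moment p n (indicator B)"
    using g unfolding coord_moment_def by (intro sum.cong) simp_all
  then have "coord_moment p n (indicator A) < coord_moment p n (indicator B)"
    using coord_moment_compress_less[of u "indicator A"] u by (simp add: indicator_def)
  ultimately show thesis
    by (rule that[OF B])
qed

lemma lex_maximal_indicator_monotone:
  fixes \<Phi> :: "real \<Rightarrow> real"
  assumes cv: "convex_on {0..1} \<Phi>" and A: "A \<subseteq> cube p n"
    and J_max: "\<And>B. B \<subseteq> cube p n \<Longrightarrow> card B = card A \<Longrightarrow>
      expect p n (\<lambda>x. \<Phi> (noise_op p n eps (indicator B) x))
        \<le> expect p n (\<lambda>x. \<Phi> (noise_op p n eps (indicator A) x))"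
    and moment_max: "\<And>B. B \<subseteq> cube p n \<Longrightarrow> card B = card A \<Longrightarrow>
      expect p n (\<lambda>x. \<Phi> (noise_op p n eps (indicator B) x))
        = expect p n (\<lambda>x. \<Phi> (noise_op p n eps (indicator A) x)) \<Longrightarrow>
      coord_moment p n (indicator B) \<le> coord_moment p n (indicator A)"
  shows "monotone_fun p n (indicator A)"
proof (rule ccontr)
  assume "\<not> monotone_fun p n (indicator A)"
  then obtain B where B: "B \<subseteq> cube p n" "card B = card A"
    and J_le: "expect p n (\<lambda>x. \<Phi> (noise_op p n eps (indicator A) x))
      \<le> expect p n (\<lambda>x. \<Phi> (noise_op p n eps (indicator B) x))"
    and moment_less: "coord_moment p n (indicator A) < coord_moment p n (indicator B)"
    by (rule compress_non_monotone_indicator[OF cv A])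
  then show False
    using J_max[OF B] moment_max[OF B] by simp
qed

end

lemma boolean_fun_as_indicator:
  assumes "0 < p" and "boolean_fun p n g"
  obtains B where "B \<subseteq> cube p n" and "expect p n g = real (card B) / real (p ^ n)"
    and "\<And>x. noise_op p n eps g x = noise_op p n eps (indicator B) x"
proof -
  obtain B where B: "B \<subseteq> cube p n" and g: "\<And>x. x \<in> cube p n \<Longrightarrow> g x = indicator B x"
    using boolean_fun_indicator_on_cube[OF assms(2)] by blast
  show thesis
  proof (rule that[OF B])
    show "expect p n g = real (card B) / real (p ^ n)"
      using expect_cong[OF g] B by (simp add: expect_indicator)
    show "noise_op p n eps g x = noise_op p n eps (indicator B) x" for x
      using g by (rule noise_op_cong[OF assms(1)])
  qed
qed

theorem theorem5:
  fixes p n :: nat and eps :: real and j :: nat and \<Phi> :: "real \<Rightarrow> real"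
  assumes "p \<ge> 2" and "n \<ge> 1"
    and "0 \<le> eps" and "eps \<le> 1 - 1 / real p"
    and "j \<le> p ^ n"
    and "convex_on {0..1} \<Phi>"
  shows "\<exists>f. boolean_fun p n f \<and> monotone_fun p n f
           \<and> expect p n f = real j / real (p ^ n)
           \<and> (\<forall>g. boolean_fun p n g \<and> expect p n g = real j / real (p ^ n) \<longrightarrow>
                 expect p n (\<lambda>x. \<Phi> (noise_op p n eps f x))
                   \<ge> expect p n (\<lambda>x. \<Phi> (noise_op p n eps g x)))"
proof -
  interpret noise_setting p n eps
    using assms by unfold_locales
  let ?J = "\<lambda>f. expect p n (\<lambda>x. \<Phi> (noise_op p n eps f x))"
  let ?sets = "{A. A \<subseteq> cube p n \<and> card A = j}"
  have "finite ?sets"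
    by (rule finite_subset[of _ "Pow (cube p n)"]) (auto simp: finite_cube)
  moreover have "?sets \<noteq> {}"
    using obtain_subset_with_card_n[of j "cube p n"] assms(5) by (auto simp: card_cube)
  ultimately obtain A where A: "A \<in> ?sets"
    and J_max: "\<forall>B\<in>?sets. ?J (indicator B) \<le> ?J (indicator A)"
    and moment_max: "\<forall>B\<in>?sets. ?J (indicator B) = ?J (indicator A)
      \<longrightarrow> coord_moment p n (indicator B) \<le> coord_moment p n (indicator A)"
    using finite_lex_maximum[of ?sets "\<lambda>B. ?J (indicator B)" "\<lambda>B. coord_moment p n (indicator B)"]
    by blast
  then have A_sub: "A \<subseteq> cube p n" and card_A: "card A = j"
    by auto
  have mono: "monotone_fun p n (indicator A)"
    using J_max moment_max card_A
    by (intro lex_maximal_indicator_monotone[OF assms(6) A_sub]) auto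
  have mean: "expect p n (indicator A) = real j / real (p ^ n)"
    using A_sub card_A by (simp add: expect_indicator)
  have opt: "?J g \<le> ?J (indicator A)"
    if g_bool: "boolean_fun p n g" and g_mean: "expect p n g = real j / real (p ^ n)" for g
  proof -
    obtain B where B: "B \<subseteq> cube p n" and B_mean: "expect p n g = real (card B) / real (p ^ n)"
      and g_eq: "\<And>x. noise_op p n eps g x = noise_op p n eps (indicator B) x"
      using boolean_fun_as_indicator[OF p_pos g_bool] by blast
    have "card B = j"
      using B_mean g_mean p_pos by auto
    with B J_max show ?thesis
      by (simp add: g_eq)
  qed
  have "boolean_fun p n (indicator A)"
    by (simp add: boolean_fun_def indicator_def)
  with mono mean opt show ?thesis
    by blast
qed

end
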